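(* For every $n\ge1$ and every choice of coefficients there exist real polynomials $\alpha,\beta,\gamma,\delta$ in $h$ with $\deg\alpha,\deg\delta\le[\frac{n-1}{2}]$, $\deg\beta\le[\frac{n-2}{2}]$, $\deg\gamma\le[\frac n2]$, and a real polynomial $\phi$ of degree at most $2n+\frac{3+(-1)^n}{2}$, such that for all $h\in(0,+\infty)$, $$M(h)=\alpha(h)I_{0,1}(h)+\beta(h)I_{1,1}(h)+\gamma(h)J_{0,0}(h)+\delta(h)J_{0,1}(h)+\phi\big(u(h)\big).$$ (Here a polynomial of negative degree bound is the zero polynomial.)
   Context: Fix an integer $n\ge 1$ and real coefficients $a^k_{i,j},b^k_{i,j}$ ($k=1,2,3,4$; $i+j\le n$), $f_k=\sum_{0\le i+j\le n}a^k_{i,j}x^iy^j$, $g_k=\sum_{0\le i+j\le n}b^k_{i,j}x^iy^j$. For $h>0$ let $u(h)=\sqrt{(\sqrt{1+4h}-1)/2}$ (so $u^4+u^2=h$), $\Gamma_h$ the circle $x^2+y^2=h$, and $A=(u,u^2)$, $B=(u,-u^2)$, $C=(-u,-u^2)$, $D=(-u,u^2)$. Let $\widehat{AB},\widehat{BC},\widehat{CD},\widehat{DA}$ be the arcs of $\Gamma_h$ traversed clockwise from $A$ to $B$ (through $(\sqrt h,0)$), $B$ to $C$ (through $(0,-\sqrt h)$), $C$ to $D$ (through $(-\sqrt h,0)$), $D$ to $A$ (through $(0,\sqrt h)$). Define $$M(h)=\int_{\widehat{AB}}g_1dx-f_1dy+\int_{\widehat{BC}}g_2dx-f_2dy+\int_{\widehat{CD}}g_3dx-f_3dy+\int_{\widehat{DA}}g_4dx-f_4dy.$$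 For integers $i,j\ge0$, $I_{i,j}(h)=\int_{\widehat{AB}}x^iy^jdx$, $J_{i,j}(h)=\int_{\widehat{BC}}x^iy^jdx$. $[p]$ is the integer part of $p$. *)

theory Defs
  imports "HOL-Analysis.Analysis" "HOL-Computational_Algebra.Polynomial"
begin

text \<open>u(h) = sqrt((sqrt(1+4h)-1)/2), so that u^4 + u^2 = h.\<close>
definition uu :: "real \<Rightarrow> real" where
  "uu h = sqrt ((sqrt (1 + 4 * h) - 1) / 2)"

definition bipoly :: "nat \<Rightarrow> (nat \<Rightarrow> nat \<Rightarrow> real) \<Rightarrow> real \<Rightarrow> real \<Rightarrow> real" where
  "bipoly n c x y = (\<Sum>(i,j)\<in>{(i,j). i + j \<le> n}. c i j * x ^ i * y ^ j)"

text \<open>The point A=(u,u^2) corresponds to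
  t = - arctan u, B=(u,-u^2) to t = arctan u, C=(-u,-u^2) to t = pi - arctan u,
  D=(-u,u^2) to t = pi + arctan u (equivalently A again at 2 pi - arctan u).\<close>
definition cw :: "real \<Rightarrow> real \<Rightarrow> real \<times> real" where
  "cw h t = (sqrt h * cos t, - (sqrt h * sin t))"

definition thA :: "real \<Rightarrow> real" where
  "thA h = arctan (uu h)"

definition arc_int :: "real \<Rightarrow> real \<Rightarrow> real \<Rightarrow> (real \<Rightarrow> real \<Rightarrow> real) \<Rightarrow> (real \<Rightarrow> real \<Rightarrow> real) \<Rightarrow> real" where
  "arc_int h a b P Q = integral {a..b} (\<lambda>t.
      P (fst (cw h t)) (snd (cw h t)) * (- (sqrt h * sin t))
    + Q (fst (cw h t)) (snd (cw h t)) * (- (sqrt h * cos t)))"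

definition arcAB where "arcAB h P Q = arc_int h (- thA h) (thA h) P Q"
definition arcBC where "arcBC h P Q = arc_int h (thA h) (pi - thA h) P Q"
definition arcCD where "arcCD h P Q = arc_int h (pi - thA h) (pi + thA h) P Q"
definition arcDA where "arcDA h P Q = arc_int h (pi + thA h) (2 * pi - thA h) P Q"

text \<open>M(h) with coefficients a k i j, b k i j of f_k, g_k (k = 1..4).\<close>
definition Mfun :: "nat \<Rightarrow> (nat \<Rightarrow> nat \<Rightarrow> nat \<Rightarrow> real) \<Rightarrow> (nat \<Rightarrow> nat \<Rightarrow> nat \<Rightarrow> real) \<Rightarrow> real \<Rightarrow> real" where
  "Mfun n a b h =
     arcAB h (\<lambda>x y. bipoly n (b 1) x y) (\<lambda>x y. - bipoly n (a 1) x y)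
   + arcBC h (\<lambda>x y. bipoly n (b 2) x y) (\<lambda>x y. - bipoly n (a 2) x y)
   + arcCD h (\<lambda>x y. bipoly n (b 3) x y) (\<lambda>x y. - bipoly n (a 3) x y)
   + arcDA h (\<lambda>x y. bipoly n (b 4) x y) (\<lambda>x y. - bipoly n (a 4) x y)"

definition Iint :: "nat \<Rightarrow> nat \<Rightarrow> real \<Rightarrow> real" where
  "Iint i j h = arcAB h (\<lambda>x y. x ^ i * y ^ j) (\<lambda>x y. 0)"

definition Jint :: "nat \<Rightarrow> nat \<Rightarrow> real \<Rightarrow> real" where
  "Jint i j h = arcBC h (\<lambda>x y. x ^ i * y ^ j) (\<lambda>x y. 0)"

definition deg_le :: "real poly \<Rightarrow> int \<Rightarrow> bool" where
  "deg_le p d \<longleftrightarrow> p = 0 \<or> int (degree p) \<le> d"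

end

theory Submission
  imports Defs
begin

text \<open>With the clockwise parametrisation \<open>x = \<surd>h cos t\<close>, \<open>y = -\<surd>h sin t\<close> one has \<open>dx = y dt\<close>,
  \<open>dy = -x dt\<close>, so every arc integral in \<open>M\<close> is a combination of integrals of monomials
  \<open>x\<^sup>a y\<^sup>b\<close> with \<open>1 \<le> a + b \<le> n + 1\<close>. Differentiating \<open>x\<^bsup>a+1\<^esup> y\<^bsup>b+1\<^esup>\<close> and using
  \<open>x\<^sup>2 + y\<^sup>2 = h\<close> lowers \<open>a\<close> or \<open>b\<close> by two, so \<open>x\<^sup>a y\<^sup>b\<close> has an antiderivative
  \<open>G + c h\<^bsup>(a+b)/2\<^esup> t\<close> with \<open>G\<close> polynomial in \<open>x, y, h\<close> and \<open>c = 0\<close> for odd \<open>a + b\<close>.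
  At the corners \<open>(\<plusminus>u, \<plusminus>u\<^sup>2)\<close>, where \<open>h = u\<^sup>4 + u\<^sup>2\<close>, \<open>G\<close> is a polynomial in \<open>u\<close>, while the
  secular term contributes \<open>c h\<^bsup>k\<^esup>\<close> times the arc's angle, \<open>2 arctan u\<close> or \<open>\<pi> - 2 arctan u\<close>.
  These angles are absorbed by \<open>I\<^sub>0\<^sub>,\<^sub>1 = h arctan u - u\<^sup>3\<close> and \<open>J\<^sub>0\<^sub>,\<^sub>1 = h (\<pi>/2 - arctan u) + u\<^sup>3\<close>;
  in particular \<open>\<beta> = \<gamma> = 0\<close> suffices.\<close>

definition circ_x :: "real \<Rightarrow> real \<Rightarrow> real" where
  "circ_x h t = sqrt h * cos t"

definition circ_y :: "real \<Rightarrow> real \<Rightarrow> real" where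
  "circ_y h t = - (sqrt h * sin t)"

lemma cw_eq_circ: "cw h t = (circ_x h t, circ_y h t)"
  unfolding cw_def circ_x_def circ_y_def by simp

lemma has_real_derivative_circ_x: "(circ_x h has_real_derivative circ_y h t) (at t)"
  unfolding circ_x_def circ_y_def by (auto intro!: derivative_eq_intros)

lemma has_real_derivative_circ_y: "(circ_y h has_real_derivative - circ_x h t) (at t)"
  unfolding circ_x_def circ_y_def by (auto intro!: derivative_eq_intros)

lemma circ_x_sq_plus_circ_y_sq: "0 \<le> h \<Longrightarrow> circ_x h t ^ 2 + circ_y h t ^ 2 = h"
  unfolding circ_x_def circ_y_def by (simp add: power_mult_distrib flip: distrib_left)

lemma has_real_derivative_circ_monomial:
  "((\<lambda>t. circ_x h t ^ Suc a * circ_y h t ^ Suc b) has_real_derivative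
     real (Suc a) * (circ_x h t ^ a * circ_y h t ^ (b + 2))
     - real (Suc b) * (circ_x h t ^ (a + 2) * circ_y h t ^ b)) (at t)"
proof -
  have "((\<lambda>t. circ_x h t ^ Suc a * circ_y h t ^ Suc b) has_real_derivative
     (1 + of_nat a) * (circ_y h t * circ_x h t ^ a) * circ_y h t ^ Suc b
     + (1 + of_nat b) * (- circ_x h t * circ_y h t ^ b) * circ_x h t ^ Suc a) (at t)"
    by (intro DERIV_mult DERIV_power_Suc has_real_derivative_circ_x has_real_derivative_circ_y)
  then show ?thesis by (simp add: algebra_simps power2_eq_square)
qed

lemma continuous_on_circ_monomial: "continuous_on S (\<lambda>t. circ_x h t ^ a * circ_y h t ^ b)"
  unfolding circ_x_def circ_y_def by (intro continuous_intros)

lemma uu_pos: "0 < h \<Longrightarrow> 0 < uu h"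
  unfolding uu_def by (auto intro!: real_sqrt_gt_zero simp: real_less_rsqrt)

lemma uu_quartic: "0 < h \<Longrightarrow> uu h ^ 4 + uu h ^ 2 = h"
proof -
  assume h: "0 < h"
  have "1 \<le> sqrt (1 + 4 * h)" using h by (simp add: real_le_rsqrt)
  then have u2: "uu h ^ 2 = (sqrt (1 + 4 * h) - 1) / 2" unfolding uu_def by simp
  have "uu h ^ 4 + uu h ^ 2 = (uu h ^ 2) ^ 2 + uu h ^ 2" by simp
  also have "\<dots> = (sqrt (1 + 4 * h) ^ 2 - 1) / 4"
    unfolding u2 by (simp add: power2_eq_square field_simps)
  finally show ?thesis using h by simp
qed

lemma sqrt_eq_uu: "0 < h \<Longrightarrow> sqrt h = uu h * sqrt (1 + uu h ^ 2)"
proof -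
  assume h: "0 < h"
  have "h = uu h ^ 2 * (1 + uu h ^ 2)"
    using uu_quartic[OF h] by (simp add: algebra_simps flip: power_add)
  then have "sqrt h = sqrt (uu h ^ 2) * sqrt (1 + uu h ^ 2)" by (metis real_sqrt_mult)
  then show ?thesis using uu_pos[OF h] by simp
qed

lemma thA_bounds: "0 < h \<Longrightarrow> 0 < thA h \<and> thA h < pi / 2"
  unfolding thA_def using uu_pos[of h] arctan_ubound[of "uu h"] by (simp add: arctan_less_zero_iff)

lemma
  assumes "0 < h"
  shows cos_thA: "sqrt h * cos (thA h) = uu h"
    and sin_thA: "sqrt h * sin (thA h) = uu h ^ 2"
proof -
  have "1 + uu h ^ 2 \<noteq> 0" "1 + uu h * uu h \<noteq> 0"
    by (smt (verit) zero_le_power2, smt (verit) zero_le_square)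
  then show "sqrt h * cos (thA h) = uu h" "sqrt h * sin (thA h) = uu h ^ 2"
    unfolding thA_def cos_arctan sin_arctan using sqrt_eq_uu[OF assms]
    by (simp_all add: power2_eq_square)
qed

lemma circ_at_corners:
  assumes "0 < h"
  shows "circ_x h (- thA h) = uu h" "circ_y h (- thA h) = uu h ^ 2"
    "circ_x h (thA h) = uu h" "circ_y h (thA h) = - (uu h ^ 2)"
    "circ_x h (pi - thA h) = - uu h" "circ_y h (pi - thA h) = - (uu h ^ 2)"
    "circ_x h (pi + thA h) = - uu h" "circ_y h (pi + thA h) = uu h ^ 2"
    "circ_x h (2 * pi - thA h) = uu h" "circ_y h (2 * pi - thA h) = uu h ^ 2"
  using cos_thA[OF assms] sin_thA[OF assms] unfolding circ_x_def circ_y_def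
  by (simp_all add: sin_diff cos_diff sin_add cos_add)

lemma deg_le_zero [simp]: "deg_le 0 d"
  by (simp add: deg_le_def)

lemma deg_le_mono: "deg_le p d \<Longrightarrow> d \<le> e \<Longrightarrow> deg_le p e"
  by (auto simp: deg_le_def)

lemma deg_le_add: "deg_le p d \<Longrightarrow> deg_le q d \<Longrightarrow> deg_le (p + q) d"
  unfolding deg_le_def using degree_add_le[of p "nat d" q]
  by (metis add_cancel_left_left add_cancel_right_right int_ops(1) le_nat_iff nat_int_add
      of_nat_0_le_iff order_trans)

lemma deg_le_diff: "deg_le p d \<Longrightarrow> deg_le q d \<Longrightarrow> deg_le (p - q) d"
  using deg_le_add[of p d "- q"] by (auto simp: deg_le_def)

lemma deg_le_smult: "deg_le p d \<Longrightarrow> deg_le (smult c p) d"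
  by (auto simp: deg_le_def)

lemma deg_le_mult: "deg_le p d \<Longrightarrow> deg_le q e \<Longrightarrow> deg_le (p * q) (d + e)"
  unfolding deg_le_def using degree_mult_le[of p q] by fastforce

lemma deg_le_monom: "int k \<le> d \<Longrightarrow> deg_le (monom c k) d"
  unfolding deg_le_def by (cases "c = 0") (auto simp: degree_monom_eq)

definition h_poly :: "real poly" where
  "h_poly = [:0, 0, 1, 0, 1:]"

lemma poly_h_poly_uu: "0 < h \<Longrightarrow> poly h_poly (uu h) = h"
  using uu_quartic[of h] unfolding h_poly_def
  by (simp add: algebra_simps power2_eq_square power4_eq_xxxx)

lemma deg_le_h_poly_power: "deg_le (h_poly ^ k) (int (4 * k))"
  unfolding deg_le_def using degree_power_le[of h_poly k] by (simp add: h_poly_def)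

definition corner_poly :: "int \<Rightarrow> (real \<Rightarrow> real \<Rightarrow> real) \<Rightarrow> bool" where
  "corner_poly d G \<longleftrightarrow> (\<forall>sx sy. \<exists>Q. deg_le Q d \<and>
     (\<forall>h t. 0 < h \<longrightarrow> circ_x h t = sx * uu h \<longrightarrow> circ_y h t = sy * uu h ^ 2 \<longrightarrow> G h t = poly Q (uu h)))"

lemma corner_poly_circ_monomial:
  assumes "int (a + 2 * b) \<le> d"
  shows "corner_poly d (\<lambda>h t. circ_x h t ^ a * circ_y h t ^ b)"
  unfolding corner_poly_def
proof (intro allI)
  fix sx sy :: real
  have "circ_x h t ^ a * circ_y h t ^ b = poly (monom (sx ^ a * sy ^ b) (a + 2 * b)) (uu h)"
    if "circ_x h t = sx * uu h" "circ_y h t = sy * uu h ^ 2" for h t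
    unfolding that by (simp add: poly_monom power_mult_distrib power_add power_mult)
  then show "\<exists>Q. deg_le Q d \<and> (\<forall>h t. 0 < h \<longrightarrow> circ_x h t = sx * uu h \<longrightarrow>
      circ_y h t = sy * uu h ^ 2 \<longrightarrow> circ_x h t ^ a * circ_y h t ^ b = poly Q (uu h))"
    using deg_le_monom[OF assms] by blast
qed

lemma corner_polyE:
  assumes "corner_poly d G"
  obtains Q where "deg_le Q d"
    "\<And>h t. 0 < h \<Longrightarrow> circ_x h t = sx * uu h \<Longrightarrow> circ_y h t = sy * uu h ^ 2 \<Longrightarrow> G h t = poly Q (uu h)"
  using assms unfolding corner_poly_def by blast

lemma corner_poly_add:
  assumes "corner_poly d F" "corner_poly d G"
  shows "corner_poly d (\<lambda>h t. F h t + G h t)"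
  unfolding corner_poly_def
proof (intro allI)
  fix sx sy
  obtain P where "deg_le P d"
    "\<And>h t. 0 < h \<Longrightarrow> circ_x h t = sx * uu h \<Longrightarrow> circ_y h t = sy * uu h ^ 2 \<Longrightarrow> F h t = poly P (uu h)"
    using corner_polyE[OF assms(1), of sx sy] by blast
  moreover obtain Q where "deg_le Q d"
    "\<And>h t. 0 < h \<Longrightarrow> circ_x h t = sx * uu h \<Longrightarrow> circ_y h t = sy * uu h ^ 2 \<Longrightarrow> G h t = poly Q (uu h)"
    using corner_polyE[OF assms(2), of sx sy] by blast
  ultimately show "\<exists>R. deg_le R d \<and> (\<forall>h t. 0 < h \<longrightarrow> circ_x h t = sx * uu h \<longrightarrow>
      circ_y h t = sy * uu h ^ 2 \<longrightarrow> F h t + G h t = poly R (uu h))"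
    by (intro exI[of _ "P + Q"]) (simp add: deg_le_add)
qed

lemma corner_poly_scale: "corner_poly d G \<Longrightarrow> corner_poly d (\<lambda>h t. r * G h t)"
  unfolding corner_poly_def by (metis deg_le_smult poly_smult)

lemma corner_poly_scale_h:
  assumes "corner_poly d G"
  shows "corner_poly (d + 4) (\<lambda>h t. h * G h t)"
  unfolding corner_poly_def
proof (intro allI)
  fix sx sy
  obtain Q where "deg_le Q d"
    "\<And>h t. 0 < h \<Longrightarrow> circ_x h t = sx * uu h \<Longrightarrow> circ_y h t = sy * uu h ^ 2 \<Longrightarrow> G h t = poly Q (uu h)"
    using corner_polyE[OF assms, of sx sy] by blast
  moreover have "deg_le (h_poly * Q) (d + 4)"
    using deg_le_mult[OF deg_le_h_poly_power[of 1] \<open>deg_le Q d\<close>] by (simp add: add.commute)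
  ultimately show "\<exists>R. deg_le R (d + 4) \<and> (\<forall>h t. 0 < h \<longrightarrow> circ_x h t = sx * uu h \<longrightarrow>
      circ_y h t = sy * uu h ^ 2 \<longrightarrow> h * G h t = poly R (uu h))"
    by (intro exI[of _ "h_poly * Q"]) (simp add: poly_h_poly_uu)
qed

definition corner_bound :: "nat \<Rightarrow> int" where
  "corner_bound m = 2 * int m - (if even m then 1 else 0)"

definition has_corner_antiderivative :: "nat \<Rightarrow> (real \<Rightarrow> real \<Rightarrow> real) \<Rightarrow> bool" where
  "has_corner_antiderivative m f \<longleftrightarrow> (\<exists>c G. (odd m \<longrightarrow> c = 0) \<and>
     (\<forall>h\<ge>0. \<forall>t. (G h has_real_derivative f h t - c * h ^ (m div 2)) (at t)) \<and>
     corner_poly (corner_bound m) G)"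

lemma has_corner_antiderivativeI:
  assumes "odd m \<longrightarrow> c = 0" "corner_poly (corner_bound m) G"
    and "\<And>h t. 0 \<le> h \<Longrightarrow> (G h has_real_derivative f h t - c * h ^ (m div 2)) (at t)"
  shows "has_corner_antiderivative m f"
  using assms unfolding has_corner_antiderivative_def by blast

lemma has_corner_antiderivative_step:
  assumes "has_corner_antiderivative m f" and F: "corner_poly (corner_bound (m + 2)) F"
    and "0 < k"
    and F': "\<And>h t. 0 \<le> h \<Longrightarrow> (F h has_real_derivative k * g h t - r * h * f h t) (at t)"
  shows "has_corner_antiderivative (m + 2) g"
proof -
  obtain c G where c: "odd m \<longrightarrow> c = 0"
    and G': "\<forall>h\<ge>0. \<forall>t. (G h has_real_derivative f h t - c * h ^ (m div 2)) (at t)"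
    and G: "corner_poly (corner_bound m) G"
    using assms(1) unfolding has_corner_antiderivative_def by blast
  have "((\<lambda>t. 1 / k * F h t + r / k * (h * G h t)) has_real_derivative
      g h t - r * c / k * h ^ ((m + 2) div 2)) (at t)" if "0 \<le> h" for h t
  proof -
    have "((\<lambda>t. 1 / k * F h t + r / k * (h * G h t)) has_real_derivative
        1 / k * (k * g h t - r * h * f h t) + r / k * (h * (f h t - c * h ^ (m div 2)))) (at t)"
      using F' G' that by (intro DERIV_add DERIV_cmult) auto
    moreover have "1 / k * (k * g h t - r * h * f h t) + r / k * (h * (f h t - c * h ^ (m div 2)))
        = g h t - r * c / k * h ^ ((m + 2) div 2)"
      using \<open>0 < k\<close> by (simp add: field_simps)
    ultimately show ?thesis by simp
  qed
  moreover have "corner_poly (corner_bound (m + 2)) (\<lambda>h t. 1 / k * F h t + r / k * (h * G h t))"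
  proof -
    have "corner_bound (m + 2) = corner_bound m + 4" by (simp add: corner_bound_def)
    then show ?thesis
      using corner_poly_scale_h[OF G] F by (intro corner_poly_add corner_poly_scale) simp_all
  qed
  ultimately show ?thesis
    using c by (intro has_corner_antiderivativeI[of "m + 2" "r * c / k"]) auto
qed

lemma circ_monomial_shift:
  "0 \<le> h \<Longrightarrow> circ_x h t ^ (a + 2) * circ_y h t ^ b
     = h * (circ_x h t ^ a * circ_y h t ^ b) - circ_x h t ^ a * circ_y h t ^ (b + 2)"
proof -
  assume "0 \<le> h"
  then have "circ_x h t ^ 2 = h - circ_y h t ^ 2"
    using circ_x_sq_plus_circ_y_sq[of h t] by simp
  have "circ_x h t ^ (a + 2) * circ_y h t ^ b = (circ_x h t ^ a * circ_y h t ^ b) * circ_x h t ^ 2"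
    by (simp only: power_add mult_ac)
  also have "\<dots> = h * (circ_x h t ^ a * circ_y h t ^ b) - (circ_x h t ^ a * circ_y h t ^ b) * circ_y h t ^ 2"
    unfolding \<open>circ_x h t ^ 2 = h - circ_y h t ^ 2\<close> by (simp add: algebra_simps)
  finally show ?thesis by (simp only: power_add mult_ac)
qed

lemma has_corner_antiderivative_step_y:
  assumes "has_corner_antiderivative (a + b) (\<lambda>h t. circ_x h t ^ a * circ_y h t ^ b)"
  shows "has_corner_antiderivative (a + b + 2) (\<lambda>h t. circ_x h t ^ a * circ_y h t ^ (b + 2))"
proof -
  have "((\<lambda>t. circ_x h t ^ Suc a * circ_y h t ^ Suc b) has_real_derivative
      real (a + b + 2) * (circ_x h t ^ a * circ_y h t ^ (b + 2))
      - real (Suc b) * h * (circ_x h t ^ a * circ_y h t ^ b)) (at t)" if "0 \<le> h" for h t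
    using has_real_derivative_circ_monomial[of h a b t]
    unfolding circ_monomial_shift[OF that, of t a b] by (simp add: algebra_simps)
  moreover have "corner_poly (corner_bound (a + b + 2)) (\<lambda>h t. circ_x h t ^ Suc a * circ_y h t ^ Suc b)"
    by (rule corner_poly_circ_monomial) (simp add: corner_bound_def)
  ultimately show ?thesis
    by (intro has_corner_antiderivative_step[OF assms, where k = "real (a + b + 2)"
        and r = "real (Suc b)"]) auto
qed

lemma has_corner_antiderivative_step_x:
  assumes "has_corner_antiderivative (a + b) (\<lambda>h t. circ_x h t ^ a * circ_y h t ^ b)"
  shows "has_corner_antiderivative (a + b + 2) (\<lambda>h t. circ_x h t ^ (a + 2) * circ_y h t ^ b)"
proof -
  have "((\<lambda>t. - 1 * (circ_x h t ^ Suc a * circ_y h t ^ Suc b)) has_real_derivative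
      real (a + b + 2) * (circ_x h t ^ (a + 2) * circ_y h t ^ b)
      - real (Suc a) * h * (circ_x h t ^ a * circ_y h t ^ b)) (at t)" if "0 \<le> h" for h t
    using DERIV_cmult[OF has_real_derivative_circ_monomial[of h a b t], of "- 1"]
    unfolding circ_monomial_shift[OF that, of t a b] by (simp add: algebra_simps)
  moreover have "corner_poly (corner_bound (a + b + 2))
      (\<lambda>h t. - 1 * (circ_x h t ^ Suc a * circ_y h t ^ Suc b))"
    by (intro corner_poly_scale corner_poly_circ_monomial) (simp add: corner_bound_def)
  ultimately show ?thesis
    by (intro has_corner_antiderivative_step[OF assms, where k = "real (a + b + 2)"
        and r = "real (Suc a)"]) auto
qed

lemma has_corner_antiderivative_circ_monomial_base:
  assumes "a \<le> 1" "b \<le> 1"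
  shows "has_corner_antiderivative (a + b) (\<lambda>h t. circ_x h t ^ a * circ_y h t ^ b)"
proof -
  consider "a = 0" "b = 0" | "a = 1" "b = 0" | "a = 0" "b = 1" | "a = 1" "b = 1"
    using assms by linarith
  then show ?thesis
  proof cases
    case 1
    show ?thesis unfolding 1
      by (rule has_corner_antiderivativeI[where c = 1 and G = "\<lambda>h t. 0"])
        (auto simp: corner_poly_def intro!: exI[of _ 0])
  next
    case 2
    have "((\<lambda>t. - 1 * (circ_x h t ^ 0 * circ_y h t ^ 1)) has_real_derivative circ_x h t) (at t)" for h t
      using DERIV_cmult[OF has_real_derivative_circ_y, of "- 1"] by simp
    then show ?thesis unfolding 2
      by (intro has_corner_antiderivativeI[where c = 0 and G = "\<lambda>h t. - 1 * (circ_x h t ^ 0 * circ_y h t ^ 1)"]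
          corner_poly_scale corner_poly_circ_monomial) (simp_all add: corner_bound_def)
  next
    case 3
    have "((\<lambda>t. circ_x h t ^ 1 * circ_y h t ^ 0) has_real_derivative circ_y h t) (at t)" for h t
      using has_real_derivative_circ_x by simp
    then show ?thesis unfolding 3
      by (intro has_corner_antiderivativeI[where c = 0 and G = "\<lambda>h t. circ_x h t ^ 1 * circ_y h t ^ 0"]
          corner_poly_circ_monomial) (simp_all add: corner_bound_def)
  next
    case 4
    have "((\<lambda>t. 1 / 2 * (circ_x h t ^ 2 * circ_y h t ^ 0)) has_real_derivative
        circ_x h t * circ_y h t) (at t)" for h t
      using DERIV_cmult[OF DERIV_power[OF has_real_derivative_circ_x[of h t], of 2], of "1 / 2"]
      by (simp add: mult.commute)
    then show ?thesis unfolding 4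
      by (intro has_corner_antiderivativeI[where c = 0 and G = "\<lambda>h t. 1 / 2 * (circ_x h t ^ 2 * circ_y h t ^ 0)"]
          corner_poly_scale corner_poly_circ_monomial) (simp_all add: corner_bound_def)
  qed
qed

lemma has_corner_antiderivative_circ_monomial:
  "has_corner_antiderivative (a + b) (\<lambda>h t. circ_x h t ^ a * circ_y h t ^ b)"
proof (induction "a + b" arbitrary: a b rule: less_induct)
  case less
  consider (y) "2 \<le> b" | (x) "2 \<le> a" | (base) "a \<le> 1" "b \<le> 1"
    by linarith
  then show ?case
  proof cases
    case y
    then obtain b' where b: "b = b' + 2" by (metis le_add_diff_inverse2)
    show ?thesis unfolding b add.assoc[symmetric]
      by (rule has_corner_antiderivative_step_y, rule less) (simp add: b)
  next
    case x
    then obtain a' where a: "a = a' + 2" by (metis le_add_diff_inverse2)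
    have sum_eq: "a' + 2 + b = a' + b + 2" by simp
    show ?thesis unfolding a sum_eq
      by (rule has_corner_antiderivative_step_x, rule less) (simp add: a)
  next
    case base
    then show ?thesis by (rule has_corner_antiderivative_circ_monomial_base)
  qed
qed

lemma integral_eq_diff_antiderivative:
  fixes F :: "real \<Rightarrow> real"
  assumes "lo \<le> hi" "\<And>t. (F has_real_derivative f t) (at t)"
  shows "integral {lo..hi} f = F hi - F lo"
  using assms by (intro integral_unique fundamental_theorem_of_calculus)
    (auto simp flip: has_real_derivative_iff_has_vector_derivative intro: has_field_derivative_at_within)

lemma integral_between_corners:
  assumes "has_corner_antiderivative m f"
    and "\<And>h. 0 < h \<Longrightarrow> lo h \<le> hi h"
    and "\<And>h. 0 < h \<Longrightarrow> circ_x h (lo h) = lx * uu h \<and> circ_y h (lo h) = ly * uu h ^ 2"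
    and "\<And>h. 0 < h \<Longrightarrow> circ_x h (hi h) = hx * uu h \<and> circ_y h (hi h) = hy * uu h ^ 2"
  obtains c Q where "odd m \<longrightarrow> c = 0" "deg_le Q (corner_bound m)"
    "\<And>h. 0 < h \<Longrightarrow> integral {lo h..hi h} (f h) = poly Q (uu h) + c * h ^ (m div 2) * (hi h - lo h)"
proof -
  obtain c G where c: "odd m \<longrightarrow> c = 0"
    and G': "\<forall>h\<ge>0. \<forall>t. (G h has_real_derivative f h t - c * h ^ (m div 2)) (at t)"
    and G: "corner_poly (corner_bound m) G"
    using assms(1) unfolding has_corner_antiderivative_def by blast
  obtain Q_lo where "deg_le Q_lo (corner_bound m)"
    and Q_lo: "\<And>h t. 0 < h \<Longrightarrow> circ_x h t = lx * uu h \<Longrightarrow> circ_y h t = ly * uu h ^ 2 \<Longrightarrow> G h t = poly Q_lo (uu h)"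
    using corner_polyE[OF G, of lx ly] by blast
  obtain Q_hi where "deg_le Q_hi (corner_bound m)"
    and Q_hi: "\<And>h t. 0 < h \<Longrightarrow> circ_x h t = hx * uu h \<Longrightarrow> circ_y h t = hy * uu h ^ 2 \<Longrightarrow> G h t = poly Q_hi (uu h)"
    using corner_polyE[OF G, of hx hy] by blast
  have "integral {lo h..hi h} (f h) = poly (Q_hi - Q_lo) (uu h) + c * h ^ (m div 2) * (hi h - lo h)"
    if "0 < h" for h
  proof -
    have "((\<lambda>t. G h t + c * h ^ (m div 2) * t) has_real_derivative f h t) (at t)" for t
      using DERIV_add[OF G'[rule_format, of h t] DERIV_cmult[OF DERIV_ident, of "c * h ^ (m div 2)"]]
        \<open>0 < h\<close> by simp
    then have "integral {lo h..hi h} (f h)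
        = G h (hi h) + c * h ^ (m div 2) * hi h - (G h (lo h) + c * h ^ (m div 2) * lo h)"
      using assms(2)[OF that] by (rule integral_eq_diff_antiderivative[rotated])
    then show ?thesis
      using Q_lo[OF that] Q_hi[OF that] assms(3,4)[OF that] by (simp add: algebra_simps)
  qed
  with c \<open>deg_le Q_lo (corner_bound m)\<close> \<open>deg_le Q_hi (corner_bound m)\<close> show ?thesis
    by (intro that[of c "Q_hi - Q_lo"] deg_le_diff) auto
qed

lemma integral_circ_y_sq:
  assumes "0 \<le> h" "lo \<le> hi"
  shows "integral {lo..hi} (\<lambda>t. circ_y h t ^ 2)
    = (h * (hi - lo) + circ_x h hi * circ_y h hi - circ_x h lo * circ_y h lo) / 2"
proof -
  have "((\<lambda>t. (h * t + circ_x h t * circ_y h t) / 2) has_real_derivative circ_y h t ^ 2) (at t)" for t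
  proof -
    have "((\<lambda>t. (h * t + circ_x h t * circ_y h t) / 2) has_real_derivative
        (h * 1 + (circ_y h t * circ_y h t + (- circ_x h t) * circ_x h t)) / 2) (at t)"
      by (intro DERIV_cdivide DERIV_add DERIV_cmult DERIV_ident DERIV_mult
          has_real_derivative_circ_x has_real_derivative_circ_y)
    moreover have "(h * 1 + (circ_y h t * circ_y h t + (- circ_x h t) * circ_x h t)) / 2 = circ_y h t ^ 2"
      using circ_x_sq_plus_circ_y_sq[OF assms(1), of t] by (simp add: power2_eq_square algebra_simps)
    ultimately show ?thesis by simp
  qed
  from integral_eq_diff_antiderivative[OF assms(2) this] show ?thesis
    by (simp add: field_simps)
qed

lemma Iint_0_1:
  assumes "0 < h"
  shows "Iint 0 1 h = h * thA h - uu h ^ 3"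
proof -
  have "Iint 0 1 h = integral {- thA h..thA h} (\<lambda>t. circ_y h t ^ 2)"
    unfolding Iint_def arcAB_def arc_int_def cw_eq_circ by (simp add: circ_y_def power2_eq_square)
  also have "\<dots> = h * thA h - uu h ^ 3"
    using assms thA_bounds[OF assms] circ_at_corners[OF assms]
    by (subst integral_circ_y_sq) (simp_all add: power2_eq_square power3_eq_cube field_simps)
  finally show ?thesis .
qed

lemma Jint_0_1:
  assumes "0 < h"
  shows "Jint 0 1 h = h * (pi / 2 - thA h) + uu h ^ 3"
proof -
  have "Jint 0 1 h = integral {thA h..pi - thA h} (\<lambda>t. circ_y h t ^ 2)"
    unfolding Jint_def arcBC_def arc_int_def cw_eq_circ by (simp add: circ_y_def power2_eq_square)
  also have "\<dots> = h * (pi / 2 - thA h) + uu h ^ 3"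
    using assms thA_bounds[OF assms] circ_at_corners[OF assms]
    by (subst integral_circ_y_sq) (simp_all add: power2_eq_square power3_eq_cube field_simps)
  finally show ?thesis .
qed

definition phi_bound :: "nat \<Rightarrow> int" where
  "phi_bound n = int (2 * n + (if even n then 2 else 1))"

lemma corner_bound_le_phi_bound:
  assumes "m \<le> n + 1"
  shows "corner_bound m \<le> phi_bound n"
proof -
  have "odd m \<Longrightarrow> odd n \<Longrightarrow> m \<le> n" using assms by (cases "m = n + 1") auto
  then show ?thesis using assms unfolding corner_bound_def phi_bound_def by auto
qed

text \<open>The form of the theorem with \<open>\<beta> = \<gamma> = 0\<close>.\<close>
definition expressible :: "nat \<Rightarrow> (real \<Rightarrow> real) \<Rightarrow> bool" where
  "expressible n f \<longleftrightarrow> (\<exists>\<alpha> \<delta> \<phi>. deg_le \<alpha> (int ((n - 1) div 2)) \<and> deg_le \<delta> (int ((n - 1) div 2)) \<and>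
     deg_le \<phi> (phi_bound n) \<and>
     (\<forall>h>0. f h = poly \<alpha> h * Iint 0 1 h + poly \<delta> h * Jint 0 1 h + poly \<phi> (uu h)))"

lemma expressibleI:
  assumes "deg_le \<alpha> (int ((n - 1) div 2))" "deg_le \<delta> (int ((n - 1) div 2))" "deg_le \<phi> (phi_bound n)"
    and "\<And>h. 0 < h \<Longrightarrow> f h = poly \<alpha> h * Iint 0 1 h + poly \<delta> h * Jint 0 1 h + poly \<phi> (uu h)"
  shows "expressible n f"
  using assms unfolding expressible_def by blast

lemma expressible_add:
  assumes "expressible n f" "expressible n g"
  shows "expressible n (\<lambda>h. f h + g h)"
proof -
  obtain \<alpha>1 \<delta>1 \<phi>1 where "deg_le \<alpha>1 (int ((n - 1) div 2))" "deg_le \<delta>1 (int ((n - 1) div 2))"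
    "deg_le \<phi>1 (phi_bound n)"
    "\<forall>h>0. f h = poly \<alpha>1 h * Iint 0 1 h + poly \<delta>1 h * Jint 0 1 h + poly \<phi>1 (uu h)"
    using assms(1) unfolding expressible_def by blast
  moreover obtain \<alpha>2 \<delta>2 \<phi>2 where "deg_le \<alpha>2 (int ((n - 1) div 2))" "deg_le \<delta>2 (int ((n - 1) div 2))"
    "deg_le \<phi>2 (phi_bound n)"
    "\<forall>h>0. g h = poly \<alpha>2 h * Iint 0 1 h + poly \<delta>2 h * Jint 0 1 h + poly \<phi>2 (uu h)"
    using assms(2) unfolding expressible_def by blast
  ultimately show ?thesis
    by (intro expressibleI[of "\<alpha>1 + \<alpha>2" n "\<delta>1 + \<delta>2" "\<phi>1 + \<phi>2"] deg_le_add)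
      (simp_all add: algebra_simps)
qed

lemma expressible_scale:
  assumes "expressible n f"
  shows "expressible n (\<lambda>h. r * f h)"
proof -
  obtain \<alpha> \<delta> \<phi> where "deg_le \<alpha> (int ((n - 1) div 2))" "deg_le \<delta> (int ((n - 1) div 2))"
    "deg_le \<phi> (phi_bound n)"
    "\<forall>h>0. f h = poly \<alpha> h * Iint 0 1 h + poly \<delta> h * Jint 0 1 h + poly \<phi> (uu h)"
    using assms unfolding expressible_def by blast
  then show ?thesis
    by (intro expressibleI[of "smult r \<alpha>" n "smult r \<delta>" "smult r \<phi>"] deg_le_smult)
      (simp_all add: algebra_simps)
qed

lemma expressible_cong: "expressible n f \<Longrightarrow> (\<And>h. 0 < h \<Longrightarrow> f h = g h) \<Longrightarrow> expressible n g"
  unfolding expressible_def by simp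

lemma expressible_sum:
  "finite S \<Longrightarrow> (\<And>i. i \<in> S \<Longrightarrow> expressible n (f i)) \<Longrightarrow> expressible n (\<lambda>h. \<Sum>i\<in>S. f i h)"
proof (induction S rule: finite_induct)
  case empty
  show ?case by (rule expressibleI[of 0 n 0 0]) simp_all
next
  case (insert x F)
  then show ?case using expressible_add[of n "f x" "\<lambda>h. \<Sum>i\<in>F. f i h"] by simp
qed

lemma expressible_poly_uu: "deg_le Q (phi_bound n) \<Longrightarrow> expressible n (\<lambda>h. poly Q (uu h))"
  by (rule expressibleI[of 0 n 0 Q]) simp_all

lemma
  assumes "2 * j + 2 \<le> n + 1"
  shows expressible_h_power_AB_angle: "expressible n (\<lambda>h. h ^ (j + 1) * (2 * thA h))"
    and expressible_h_power_BC_angle: "expressible n (\<lambda>h. h ^ (j + 1) * (pi - 2 * thA h))"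
proof -
  have "j \<le> (n - 1) div 2" using assms by linarith
  then have \<alpha>: "deg_le (monom 2 j) (int ((n - 1) div 2))"
    by (intro deg_le_monom) simp
  have "deg_le (h_poly ^ j * monom 2 3) (int (4 * j) + 3)"
    by (intro deg_le_mult deg_le_h_poly_power deg_le_monom) simp
  then have \<phi>: "deg_le (h_poly ^ j * monom 2 3) (phi_bound n)"
    by (rule deg_le_mono) (use assms in \<open>auto simp: phi_bound_def\<close>)
  have \<phi>_val: "poly (h_poly ^ j * monom 2 3) (uu h) = 2 * h ^ j * uu h ^ 3" if "0 < h" for h
    using that by (simp add: poly_power poly_h_poly_uu poly_monom)
  show "expressible n (\<lambda>h. h ^ (j + 1) * (2 * thA h))"
  proof (rule expressibleI[OF \<alpha> deg_le_zero \<phi>])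
    fix h :: real
    assume "0 < h"
    then show "h ^ (j + 1) * (2 * thA h) = poly (monom 2 j) h * Iint 0 1 h + poly 0 h * Jint 0 1 h
        + poly (h_poly ^ j * monom 2 3) (uu h)"
      unfolding \<phi>_val[OF \<open>0 < h\<close>] Iint_0_1[OF \<open>0 < h\<close>] by (simp add: poly_monom algebra_simps)
  qed
  show "expressible n (\<lambda>h. h ^ (j + 1) * (pi - 2 * thA h))"
  proof (rule expressibleI[OF deg_le_zero \<alpha> deg_le_smult[OF \<phi>, of "- 1"]])
    fix h :: real
    assume "0 < h"
    then show "h ^ (j + 1) * (pi - 2 * thA h) = poly 0 h * Iint 0 1 h + poly (monom 2 j) h * Jint 0 1 h
        + poly (smult (- 1) (h_poly ^ j * monom 2 3)) (uu h)"
      unfolding poly_smult \<phi>_val[OF \<open>0 < h\<close>] Jint_0_1[OF \<open>0 < h\<close>]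
      by (simp add: poly_monom algebra_simps)
  qed
qed

lemma expressible_integral_circ_monomial:
  assumes "1 \<le> a + b" "a + b \<le> n + 1"
    and "\<And>h. 0 < h \<Longrightarrow> lo h \<le> hi h"
    and "\<And>h. 0 < h \<Longrightarrow> circ_x h (lo h) = lx * uu h \<and> circ_y h (lo h) = ly * uu h ^ 2"
    and "\<And>h. 0 < h \<Longrightarrow> circ_x h (hi h) = hx * uu h \<and> circ_y h (hi h) = hy * uu h ^ 2"
    and span: "(\<forall>h>0. hi h - lo h = 2 * thA h) \<or> (\<forall>h>0. hi h - lo h = pi - 2 * thA h)"
  shows "expressible n (\<lambda>h. integral {lo h..hi h} (\<lambda>t. circ_x h t ^ a * circ_y h t ^ b))"
proof -
  obtain c Q where c: "odd (a + b) \<longrightarrow> c = 0" and Q: "deg_le Q (corner_bound (a + b))"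
    and integral_eq: "\<And>h. 0 < h \<Longrightarrow> integral {lo h..hi h} (\<lambda>t. circ_x h t ^ a * circ_y h t ^ b)
      = poly Q (uu h) + c * h ^ ((a + b) div 2) * (hi h - lo h)"
    using integral_between_corners[OF has_corner_antiderivative_circ_monomial assms(3-5)] by blast
  have "expressible n (\<lambda>h. poly Q (uu h))"
    using deg_le_mono[OF Q corner_bound_le_phi_bound[OF assms(2)]] by (rule expressible_poly_uu)
  moreover have "expressible n (\<lambda>h. c * (h ^ ((a + b) div 2) * (hi h - lo h)))"
  proof (cases "odd (a + b)")
    case True
    then show ?thesis
      using c expressible_poly_uu[OF deg_le_zero] by simp
  next
    case False
    then obtain k where "a + b = 2 * k" by (metis evenE)
    with assms(1) obtain j where j: "a + b = 2 * j + 2"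
      by (intro that[of "k - 1"]) simp
    have "expressible n (\<lambda>h. h ^ (j + 1) * (hi h - lo h))"
      using span
    proof
      assume "\<forall>h>0. hi h - lo h = 2 * thA h"
      then show ?thesis
        using j assms(2) by (intro expressible_cong[OF expressible_h_power_AB_angle[of j n]]) simp_all
    next
      assume "\<forall>h>0. hi h - lo h = pi - 2 * thA h"
      then show ?thesis
        using j assms(2) by (intro expressible_cong[OF expressible_h_power_BC_angle[of j n]]) simp_all
    qed
    then show ?thesis using j by (intro expressible_scale) simp
  qed
  ultimately show ?thesis
    by (rule expressible_cong[OF expressible_add]) (simp add: integral_eq)
qed

lemma finite_total_degree_le: "finite {(i :: nat, j :: nat). i + j \<le> n}"
  by (rule finite_subset[of _ "{..n} \<times> {..n}"]) auto

lemma arc_int_bipoly: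
  "arc_int h lo hi (\<lambda>x y. bipoly n B x y) (\<lambda>x y. - bipoly n A x y) =
   (\<Sum>(i, j)\<in>{(i, j). i + j \<le> n}. B i j * integral {lo..hi} (\<lambda>t. circ_x h t ^ i * circ_y h t ^ (j + 1))
       + A i j * integral {lo..hi} (\<lambda>t. circ_x h t ^ (i + 1) * circ_y h t ^ j))"
proof -
  have integrable: "(\<lambda>t. c * (circ_x h t ^ i * circ_y h t ^ j)) integrable_on {lo..hi}" for c i j
    by (intro integrable_continuous_interval continuous_on_mult_left continuous_on_circ_monomial)
  then have integrable2: "(\<lambda>t. c * (circ_x h t ^ i * circ_y h t ^ j) + d * (circ_x h t ^ k * circ_y h t ^ l))
      integrable_on {lo..hi}" for c d i j k l
    by (intro integrable_add)
  have integral_lin: "integral {lo..hi} (\<lambda>t. c * (circ_x h t ^ i * circ_y h t ^ j) + d * (circ_x h t ^ k * circ_y h t ^ l))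
      = c * integral {lo..hi} (\<lambda>t. circ_x h t ^ i * circ_y h t ^ j)
      + d * integral {lo..hi} (\<lambda>t. circ_x h t ^ k * circ_y h t ^ l)" for c d i j k l
    using integrable by (simp add: integral_add)
  have "bipoly n B (circ_x h t) (circ_y h t) * circ_y h t - bipoly n A (circ_x h t) (circ_y h t) * - circ_x h t
      = (\<Sum>(i, j)\<in>{(i, j). i + j \<le> n}. B i j * (circ_x h t ^ i * circ_y h t ^ (j + 1))
       + A i j * (circ_x h t ^ (i + 1) * circ_y h t ^ j))" for t
    unfolding bipoly_def mult_minus_right diff_minus_eq_add sum_distrib_right sum.distrib[symmetric]
    by (rule sum.cong) (auto simp: mult_ac)
  then have "arc_int h lo hi (\<lambda>x y. bipoly n B x y) (\<lambda>x y. - bipoly n A x y) =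
    integral {lo..hi} (\<lambda>t. \<Sum>(i, j)\<in>{(i, j). i + j \<le> n}. B i j * (circ_x h t ^ i * circ_y h t ^ (j + 1))
       + A i j * (circ_x h t ^ (i + 1) * circ_y h t ^ j))"
    unfolding arc_int_def cw_eq_circ fst_conv snd_conv circ_x_def[symmetric] circ_y_def[symmetric]
      minus_mult_left[symmetric] by simp
  also have "\<dots> = (\<Sum>(i, j)\<in>{(i, j). i + j \<le> n}. integral {lo..hi} (\<lambda>t. B i j * (circ_x h t ^ i * circ_y h t ^ (j + 1))
       + A i j * (circ_x h t ^ (i + 1) * circ_y h t ^ j)))"
    unfolding case_prod_unfold
    by (rule integral_sum, rule finite_total_degree_le[unfolded case_prod_unfold], rule integrable2)
  also have "\<dots> = (\<Sum>(i, j)\<in>{(i, j). i + j \<le> n}. B i j * integral {lo..hi} (\<lambda>t. circ_x h t ^ i * circ_y h t ^ (j + 1))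
       + A i j * integral {lo..hi} (\<lambda>t. circ_x h t ^ (i + 1) * circ_y h t ^ j))"
    by (rule sum.cong[OF refl]) (simp only: case_prod_unfold integral_lin)
  finally show ?thesis .
qed

lemma expressible_arc_int:
  assumes "\<And>h. 0 < h \<Longrightarrow> lo h \<le> hi h"
    and "\<And>h. 0 < h \<Longrightarrow> circ_x h (lo h) = lx * uu h \<and> circ_y h (lo h) = ly * uu h ^ 2"
    and "\<And>h. 0 < h \<Longrightarrow> circ_x h (hi h) = hx * uu h \<and> circ_y h (hi h) = hy * uu h ^ 2"
    and "(\<forall>h>0. hi h - lo h = 2 * thA h) \<or> (\<forall>h>0. hi h - lo h = pi - 2 * thA h)"
  shows "expressible n (\<lambda>h. arc_int h (lo h) (hi h) (\<lambda>x y. bipoly n B x y) (\<lambda>x y. - bipoly n A x y))"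
  unfolding arc_int_bipoly
proof (rule expressible_sum[OF finite_total_degree_le])
  fix p
  assume "p \<in> {(i, j). i + j \<le> n}"
  then obtain i j where p: "p = (i, j)" and "i + j \<le> n" by auto
  then show "expressible n (\<lambda>h. case p of (i, j) \<Rightarrow>
      B i j * integral {lo h..hi h} (\<lambda>t. circ_x h t ^ i * circ_y h t ^ (j + 1))
    + A i j * integral {lo h..hi h} (\<lambda>t. circ_x h t ^ (i + 1) * circ_y h t ^ j))"
    unfolding p prod.case
    by (intro expressible_add expressible_scale expressible_integral_circ_monomial[OF _ _ assms]) simp_all
qed

lemma expressible_Mfun: "expressible n (Mfun n a b)"
proof -
  have "expressible n (\<lambda>h. arcAB h (\<lambda>x y. bipoly n B x y) (\<lambda>x y. - bipoly n A x y))" for A B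
    unfolding arcAB_def
    by (rule expressible_arc_int[where lx = 1 and ly = 1 and hx = 1 and hy = "- 1"])
      (auto simp: circ_at_corners dest: thA_bounds)
  moreover have "expressible n (\<lambda>h. arcBC h (\<lambda>x y. bipoly n B x y) (\<lambda>x y. - bipoly n A x y))" for A B
    unfolding arcBC_def
    by (rule expressible_arc_int[where lx = 1 and ly = "- 1" and hx = "- 1" and hy = "- 1"])
      (auto simp: circ_at_corners dest: thA_bounds)
  moreover have "expressible n (\<lambda>h. arcCD h (\<lambda>x y. bipoly n B x y) (\<lambda>x y. - bipoly n A x y))" for A B
    unfolding arcCD_def
    by (rule expressible_arc_int[where lx = "- 1" and ly = "- 1" and hx = "- 1" and hy = 1])
      (auto simp: circ_at_corners dest: thA_bounds)
  moreover have "expressible n (\<lambda>h. arcDA h (\<lambda>x y. bipoly n B x y) (\<lambda>x y. - bipoly n A x y))" for A B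
    unfolding arcDA_def
    by (rule expressible_arc_int[where lx = "- 1" and ly = 1 and hx = 1 and hy = 1])
      (auto simp: circ_at_corners dest: thA_bounds)
  ultimately show ?thesis
    unfolding Mfun_def[abs_def] by (intro expressible_add)
qed

theorem lemma2p3:
  fixes n :: nat and a b :: "nat \<Rightarrow> nat \<Rightarrow> nat \<Rightarrow> real"
  assumes "n \<ge> 1"
  shows "\<exists>\<alpha> \<beta> \<gamma> \<delta> \<phi> :: real poly.
     deg_le \<alpha> \<lfloor>(real n - 1) / 2\<rfloor> \<and> deg_le \<delta> \<lfloor>(real n - 1) / 2\<rfloor> \<and>
     deg_le \<beta> \<lfloor>(real n - 2) / 2\<rfloor> \<and> deg_le \<gamma> \<lfloor>real n / 2\<rfloor> \<and>
     deg_le \<phi> \<lfloor>2 * real n + (3 + (-1) ^ n) / 2\<rfloor> \<and>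
     (\<forall>h>0. Mfun n a b h =
        poly \<alpha> h * Iint 0 1 h + poly \<beta> h * Iint 1 1 h
      + poly \<gamma> h * Jint 0 0 h + poly \<delta> h * Jint 0 1 h + poly \<phi> (uu h))"
proof -
  obtain \<alpha> \<delta> \<phi> where \<alpha>: "deg_le \<alpha> (int ((n - 1) div 2))" and \<delta>: "deg_le \<delta> (int ((n - 1) div 2))"
    and \<phi>: "deg_le \<phi> (phi_bound n)"
    and M: "\<forall>h>0. Mfun n a b h = poly \<alpha> h * Iint 0 1 h + poly \<delta> h * Jint 0 1 h + poly \<phi> (uu h)"
    using expressible_Mfun unfolding expressible_def by blast
  have "int ((n - 1) div 2) \<le> \<lfloor>(real n - 1) / 2\<rfloor>"
    using assms by (simp add: le_floor_iff of_nat_diff)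
  moreover have "phi_bound n = \<lfloor>2 * real n + (3 + (-1) ^ n) / 2\<rfloor>"
  proof -
    have "\<lfloor>2 * real n\<rfloor> = 2 * int n" by (simp add: floor_eq_iff)
    then show ?thesis unfolding phi_bound_def by (cases "even n") simp_all
  qed
  ultimately show ?thesis
    using deg_le_mono[OF \<alpha>] deg_le_mono[OF \<delta>] \<phi> M
    by (intro exI[of _ \<alpha>] exI[of _ 0] exI[of _ 0] exI[of _ \<delta>] exI[of _ \<phi>]) simp
qed

end
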